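(* Let $n\geq 1$ and $m\geq 2$, and let $H_1$ and $H_2$ be the components of $R_t(T(2n+1,2m))$ containing $M_1=E_1\cup E_3\cup\cdots\cup E_{2m-1}$ and $M_2=E_2\cup E_4\cup\cdots\cup E_{2m}$ respectively. Then $H_1$ and $H_2$ are isomorphic.
   Context: $T(2n+1,2m)$ is the graph with vertices $(u_i,v_j)$, $i\in\mathbb{Z}_{2m}$, $j\in\mathbb{Z}_{2n+1}$, where $(u_i,v_j)$ is adjacent to $(u_{i+1},v_j)$ and $(u_i,v_{j+1})$, cellularly embedded in the torus with faces the $4$-cycles $(u_i,v_j)(u_{i+1},v_j)(u_{i+1},v_{j+1})(u_i,v_{j+1})$. For $1\le i\le 2m$, $E_i=\{(u_i,v_j)(u_{i+1},v_j):1\le j\le 2n+1\}$ (index mod $2m$). The total resonance graph $R_t(G)$ has the perfect matchings as vertices, two perfect matchings $M,M'$ being adjacent iff $M\oplus M'$ is exactly the boundary of one face. (These are distinct components, and they are the only two components.) *)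

theory Defs
  imports Main
begin

(* Vertex (u_i, v_j) of T(2n+1,2m) is encoded as the pair (i,j) with
   i < 2m (index in Z_{2m}) and j < 2n+1 (index in Z_{2n+1}).
   Edges are 2-element sets of vertices. *)

type_synonym tvert = "nat \<times> nat"

definition torus_verts :: "nat \<Rightarrow> nat \<Rightarrow> tvert set" where
  "torus_verts n m = {0..<2*m} \<times> {0..<2*n+1}"

definition uedge :: "nat \<Rightarrow> nat \<Rightarrow> nat \<Rightarrow> nat \<Rightarrow> tvert set" where
  "uedge n m i j = {(i,j), ((i+1) mod (2*m), j)}"

definition vedge :: "nat \<Rightarrow> nat \<Rightarrow> nat \<Rightarrow> nat \<Rightarrow> tvert set" where
  "vedge n m i j = {(i,j), (i, (j+1) mod (2*n+1))}"

definition torus_edges :: "nat \<Rightarrow> nat \<Rightarrow> tvert set set" where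
  "torus_edges n m =
     {uedge n m i j | i j. i < 2*m \<and> j < 2*n+1} \<union> {vedge n m i j | i j. i < 2*m \<and> j < 2*n+1}"

definition face :: "nat \<Rightarrow> nat \<Rightarrow> nat \<Rightarrow> nat \<Rightarrow> tvert set set" where
  "face n m i j = {uedge n m i j, vedge n m ((i+1) mod (2*m)) j,
                   uedge n m i ((j+1) mod (2*n+1)), vedge n m i j}"

definition torus_faces :: "nat \<Rightarrow> nat \<Rightarrow> tvert set set set" where
  "torus_faces n m = {face n m i j | i j. i < 2*m \<and> j < 2*n+1}"

definition perfect_matching :: "nat \<Rightarrow> nat \<Rightarrow> tvert set set \<Rightarrow> bool" where
  "perfect_matching n m M \<longleftrightarrow>
     M \<subseteq> torus_edges n m \<and> (\<forall>v \<in> torus_verts n m. \<exists>!e. e \<in> M \<and> v \<in> e)"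

definition symdiff :: "'a set \<Rightarrow> 'a set \<Rightarrow> 'a set" where
  "symdiff A B = (A - B) \<union> (B - A)"

definition tres_adj :: "nat \<Rightarrow> nat \<Rightarrow> tvert set set \<Rightarrow> tvert set set \<Rightarrow> bool" where
  "tres_adj n m M M' \<longleftrightarrow> perfect_matching n m M \<and> perfect_matching n m M' \<and>
     (\<exists>f \<in> torus_faces n m. symdiff M M' = f)"

definition tres_component :: "nat \<Rightarrow> nat \<Rightarrow> tvert set set \<Rightarrow> tvert set set set" where
  "tres_component n m M = {M'. (tres_adj n m)\<^sup>*\<^sup>* M M'}"

(* E_i = {(u_i,v_j)(u_{i+1},v_j) : j}, index i taken mod 2m (so E_{2m} = E_0) *)
definition Eset :: "nat \<Rightarrow> nat \<Rightarrow> nat \<Rightarrow> tvert set set" where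
  "Eset n m i = {uedge n m (i mod (2*m)) j | j. j < 2*n+1}"

definition M1 :: "nat \<Rightarrow> nat \<Rightarrow> tvert set set" where
  "M1 n m = (\<Union>k \<in> {1..m}. Eset n m (2*k - 1))"

definition M2 :: "nat \<Rightarrow> nat \<Rightarrow> tvert set set" where
  "M2 n m = (\<Union>k \<in> {1..m}. Eset n m (2*k))"

definition graph_iso :: "'a set \<Rightarrow> ('a \<Rightarrow> 'a \<Rightarrow> bool) \<Rightarrow> 'b set \<Rightarrow> ('b \<Rightarrow> 'b \<Rightarrow> bool) \<Rightarrow> bool" where
  "graph_iso V1 adj1 V2 adj2 \<longleftrightarrow>
     (\<exists>f. bij_betw f V1 V2 \<and> (\<forall>x \<in> V1. \<forall>y \<in> V1. adj1 x y \<longleftrightarrow> adj2 (f x) (f y)))"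

end

theory Submission
  imports Defs
begin

(* The rotation (u_i, v_j) |-> (u_{i+1}, v_j) is an automorphism of the torus T(2n+1,2m)
   that permutes its faces, so on edge sets it induces an automorphism of R_t; it maps
   M_1 = E_1 \<union> E_3 \<union> ... onto M_2 = E_2 \<union> E_4 \<union> ....  A graph automorphism carries the
   component of a vertex isomorphically onto the component of its image. *)

lemma image_symdiff:
  assumes "inj_on f (A \<union> B)"
  shows "f ` symdiff A B = symdiff (f ` A) (f ` B)"
  using assms unfolding symdiff_def inj_on_def by blast

lemma image_image_cancel:
  assumes "\<And>x. x \<in> A \<Longrightarrow> g (f x) = x"
  shows "g ` f ` A = A"
  using assms by (simp add: image_image cong: image_cong)

lemma rtranclp_image:
  assumes "\<And>x y. r x y \<Longrightarrow> r (f x) (f y)" and "r\<^sup>*\<^sup>* a b"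
  shows "r\<^sup>*\<^sup>* (f a) (f b)"
  using assms(2) by induction (auto intro: rtranclp.rtrancl_into_rtrancl assms(1))

lemma graph_iso_component_image:
  assumes bij: "bij_betw f S S"
    and adj_iff: "\<And>x y. x \<in> S \<Longrightarrow> y \<in> S \<Longrightarrow> adj (f x) (f y) \<longleftrightarrow> adj x y"
    and adj_S: "\<And>x y. adj x y \<Longrightarrow> x \<in> S \<and> y \<in> S"
    and "a \<in> S"
  shows "graph_iso {x. adj\<^sup>*\<^sup>* a x} adj {x. adj\<^sup>*\<^sup>* (f a) x} adj"
proof -
  define g where "g = inv_into S f"
  have g_bij: "bij_betw g S S" unfolding g_def using bij by (rule bij_betw_inv_into)
  have gf: "g (f x) = x" if "x \<in> S" for x
    unfolding g_def using bij that by (rule bij_betw_inv_into_left)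
  have fg: "f (g x) = x" if "x \<in> S" for x
    unfolding g_def using bij that by (rule bij_betw_inv_into_right)
  have f_adj: "adj (f x) (f y)" if "adj x y" for x y
    using adj_iff adj_S that by blast
  have g_adj: "adj (g x) (g y)" if "adj x y" for x y
  proof -
    have "x \<in> S" "y \<in> S" using adj_S[OF that] by blast+
    then have "adj (f (g x)) (f (g y))" using that fg by simp
    moreover have "g x \<in> S" "g y \<in> S"
      using g_bij \<open>x \<in> S\<close> \<open>y \<in> S\<close> by (blast intro: bij_betw_apply)+
    ultimately show ?thesis using adj_iff by blast
  qed
  have component_S: "{x. adj\<^sup>*\<^sup>* b x} \<subseteq> S" if "b \<in> S" for b
  proof
    fix x assume "x \<in> {x. adj\<^sup>*\<^sup>* b x}"
    then have "adj\<^sup>*\<^sup>* b x" by simp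
    then show "x \<in> S" by (induction rule: rtranclp_induct) (use that adj_S in auto)
  qed
  have fa: "f a \<in> S" using bij \<open>a \<in> S\<close> by (rule bij_betw_apply)
  have "f ` {x. adj\<^sup>*\<^sup>* a x} = {x. adj\<^sup>*\<^sup>* (f a) x}"
  proof
    show "f ` {x. adj\<^sup>*\<^sup>* a x} \<subseteq> {x. adj\<^sup>*\<^sup>* (f a) x}"
    proof
      fix y assume "y \<in> f ` {x. adj\<^sup>*\<^sup>* a x}"
      then obtain x where "adj\<^sup>*\<^sup>* a x" "y = f x" by blast
      then show "y \<in> {x. adj\<^sup>*\<^sup>* (f a) x}" using rtranclp_image[of adj f, OF f_adj] by simp
    qed
  next
    show "{x. adj\<^sup>*\<^sup>* (f a) x} \<subseteq> f ` {x. adj\<^sup>*\<^sup>* a x}"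
    proof
      fix y assume y: "y \<in> {x. adj\<^sup>*\<^sup>* (f a) x}"
      then have "adj\<^sup>*\<^sup>* (g (f a)) (g y)" using rtranclp_image[of adj g, OF g_adj] by simp
      then have "g y \<in> {x. adj\<^sup>*\<^sup>* a x}" using gf[OF \<open>a \<in> S\<close>] by simp
      moreover have "y \<in> S" using component_S[OF fa] y by blast
      then have "y = f (g y)" by (rule fg[symmetric])
      ultimately show "y \<in> f ` {x. adj\<^sup>*\<^sup>* a x}" by blast
    qed
  qed
  then have "bij_betw f {x. adj\<^sup>*\<^sup>* a x} {x. adj\<^sup>*\<^sup>* (f a) x}"
    by (rule bij_betw_subset[OF bij component_S[OF \<open>a \<in> S\<close>]])
  moreover have "adj x y \<longleftrightarrow> adj (f x) (f y)"
    if "x \<in> {x. adj\<^sup>*\<^sup>* a x}" "y \<in> {x. adj\<^sup>*\<^sup>* a x}" for x y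
    using adj_iff that component_S[OF \<open>a \<in> S\<close>] by blast
  ultimately show ?thesis
    unfolding graph_iso_def by blast
qed

lemma torus_edges_subset_Pow: "torus_edges n m \<subseteq> Pow (torus_verts n m)"
  by (auto simp: torus_edges_def torus_verts_def uedge_def vedge_def)

lemma perfect_matching_image:
  assumes bij: "bij_betw p (torus_verts n m) (torus_verts n m)"
    and edges: "\<And>e. e \<in> torus_edges n m \<Longrightarrow> p ` e \<in> torus_edges n m"
    and pm: "perfect_matching n m M"
  shows "perfect_matching n m ((`) p ` M)"
proof -
  have ME: "M \<subseteq> torus_edges n m"
    and unique: "\<And>v. v \<in> torus_verts n m \<Longrightarrow> \<exists>!e. e \<in> M \<and> v \<in> e"
    using pm unfolding perfect_matching_def by blast+
  have inj: "inj_on p (torus_verts n m)" using bij by (rule bij_betw_imp_inj_on)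
  have "\<exists>!e. e \<in> (`) p ` M \<and> v \<in> e" if v: "v \<in> torus_verts n m" for v
  proof -
    obtain w where w: "w \<in> torus_verts n m" "v = p w"
      using bij v unfolding bij_betw_def by blast
    obtain e where e: "e \<in> M" "w \<in> e" and e_unique: "\<And>e'. e' \<in> M \<Longrightarrow> w \<in> e' \<Longrightarrow> e' = e"
      using unique[OF w(1)] by blast
    show ?thesis
    proof (rule ex1I[of _ "p ` e"])
      show "p ` e \<in> (`) p ` M \<and> v \<in> p ` e" using e w by blast
    next
      fix e1 assume "e1 \<in> (`) p ` M \<and> v \<in> e1"
      then obtain e' w' where e': "e' \<in> M" "e1 = p ` e'" "w' \<in> e'" "p w' = p w"
        using w(2) by blast
      have "w' \<in> torus_verts n m" using e'(1,3) ME torus_edges_subset_Pow by blast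
      then have "w' = w" by (rule inj_onD[OF inj e'(4) _ w(1)])
      then show "e1 = p ` e" using e' e_unique by blast
    qed
  qed
  moreover have "(`) p ` M \<subseteq> torus_edges n m"
    using ME by (blast intro: edges)
  ultimately show ?thesis unfolding perfect_matching_def by (intro conjI ballI)
qed

lemma tres_adj_image:
  assumes bij: "bij_betw p (torus_verts n m) (torus_verts n m)"
    and edges: "\<And>e. e \<in> torus_edges n m \<Longrightarrow> p ` e \<in> torus_edges n m"
    and faces: "\<And>f. f \<in> torus_faces n m \<Longrightarrow> (`) p ` f \<in> torus_faces n m"
    and "tres_adj n m M M'"
  shows "tres_adj n m ((`) p ` M) ((`) p ` M')"
proof -
  obtain f where pm: "perfect_matching n m M" "perfect_matching n m M'"
    and f: "f \<in> torus_faces n m" "symdiff M M' = f"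
    using \<open>tres_adj n m M M'\<close> unfolding tres_adj_def by blast
  have "M \<union> M' \<subseteq> Pow (torus_verts n m)"
    using pm torus_edges_subset_Pow unfolding perfect_matching_def by blast
  then have "inj_on ((`) p) (M \<union> M')"
    using inj_on_image_Pow[OF bij_betw_imp_inj_on[OF bij]] by (rule inj_on_subset[rotated])
  then have "symdiff ((`) p ` M) ((`) p ` M') = (`) p ` f"
    using f(2) image_symdiff by metis
  then show ?thesis
    unfolding tres_adj_def using perfect_matching_image[OF bij edges] pm faces f(1) by blast
qed

definition torus_rotation :: "nat \<Rightarrow> nat \<Rightarrow> tvert \<Rightarrow> tvert" where
  "torus_rotation m k v = ((fst v + k) mod (2*m), snd v)"

lemma torus_rotation_rotation:
  "torus_rotation m a (torus_rotation m b v) = torus_rotation m (a + b) v"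
  unfolding torus_rotation_def fst_conv snd_conv mod_add_left_eq by (simp only: ac_simps)

lemma torus_rotation_inverse:
  assumes "v \<in> torus_verts n m"
  shows "torus_rotation m (k * (2*m - 1)) (torus_rotation m k v) = v"
proof -
  from assms have "fst v < 2*m" by (auto simp: torus_verts_def)
  then have "k * (2*m - 1) + k = k * (2*m)" by (simp add: algebra_simps)
  then have "torus_rotation m (k * (2*m - 1)) (torus_rotation m k v) = torus_rotation m (k * (2*m)) v"
    by (simp only: torus_rotation_rotation)
  also have "\<dots> = v"
    using \<open>fst v < 2*m\<close> by (simp add: torus_rotation_def)
  finally show ?thesis .
qed

lemma torus_rotation_vert: "v \<in> torus_verts n m \<Longrightarrow> torus_rotation m k v \<in> torus_verts n m"
  by (auto simp: torus_rotation_def torus_verts_def)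

lemma bij_betw_torus_rotation:
  "bij_betw (torus_rotation m k) (torus_verts n m) (torus_verts n m)"
proof (rule bij_betw_byWitness[where f' = "torus_rotation m (k * (2*m - 1))"])
  show "\<forall>v \<in> torus_verts n m. torus_rotation m (k * (2*m - 1)) (torus_rotation m k v) = v"
    using torus_rotation_inverse by blast
  show "\<forall>v \<in> torus_verts n m. torus_rotation m k (torus_rotation m (k * (2*m - 1)) v) = v"
  proof
    fix v assume "v \<in> torus_verts n m"
    have "torus_rotation m k (torus_rotation m (k * (2*m - 1)) v)
        = torus_rotation m (k * (2*m - 1)) (torus_rotation m k v)"
      by (simp only: torus_rotation_rotation add.commute)
    also have "\<dots> = v" using \<open>v \<in> torus_verts n m\<close> by (rule torus_rotation_inverse)
    finally show "torus_rotation m k (torus_rotation m (k * (2*m - 1)) v) = v" .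
  qed
qed (simp_all add: image_subset_iff torus_rotation_vert)

lemma mod_add_succ_swap: "((i + 1) mod c + k) mod c = ((i + k) mod c + 1) mod (c::nat)"
  unfolding mod_add_left_eq by (simp only: ac_simps)

lemma torus_rotation_uedge:
  "torus_rotation m k ` uedge n m i j = uedge n m ((i + k) mod (2*m)) j"
  unfolding torus_rotation_def uedge_def image_insert image_empty fst_conv snd_conv
  by (simp only: mod_add_succ_swap)

lemma torus_rotation_vedge:
  "torus_rotation m k ` vedge n m i j = vedge n m ((i + k) mod (2*m)) j"
  by (auto simp: torus_rotation_def vedge_def)

lemma torus_rotation_edge:
  assumes "e \<in> torus_edges n m"
  shows "torus_rotation m k ` e \<in> torus_edges n m"
proof -
  obtain i j where "i < 2*m" "j < 2*n+1" and e: "e = uedge n m i j \<or> e = vedge n m i j"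
    using assms unfolding torus_edges_def by blast
  moreover from \<open>i < 2*m\<close> have "(i + k) mod (2*m) < 2*m" by simp
  moreover from e have "torus_rotation m k ` e = uedge n m ((i + k) mod (2*m)) j
      \<or> torus_rotation m k ` e = vedge n m ((i + k) mod (2*m)) j"
    by (metis torus_rotation_uedge torus_rotation_vedge)
  ultimately show ?thesis
    unfolding torus_edges_def by blast
qed

lemma torus_rotation_face:
  "(`) (torus_rotation m k) ` face n m i j = face n m ((i + k) mod (2*m)) j"
  by (simp only: face_def image_insert image_empty torus_rotation_uedge torus_rotation_vedge
      mod_add_succ_swap)

lemma torus_rotation_face_mem:
  assumes "f \<in> torus_faces n m"
  shows "(`) (torus_rotation m k) ` f \<in> torus_faces n m"
proof -
  obtain i j where "i < 2*m" "j < 2*n+1" "f = face n m i j"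
    using assms unfolding torus_faces_def by blast
  moreover from \<open>i < 2*m\<close> have "(i + k) mod (2*m) < 2*m" by simp
  moreover from \<open>f = face n m i j\<close>
  have "(`) (torus_rotation m k) ` f = face n m ((i + k) mod (2*m)) j"
    by (simp only: torus_rotation_face)
  ultimately show ?thesis
    unfolding torus_faces_def by blast
qed

lemma tres_adj_Pow:
  "tres_adj n m M M' \<Longrightarrow> M \<in> Pow (Pow (torus_verts n m)) \<and> M' \<in> Pow (Pow (torus_verts n m))"
  using torus_edges_subset_Pow unfolding tres_adj_def perfect_matching_def by blast

lemma torus_rotation_matching_inverse:
  assumes "M \<in> Pow (Pow (torus_verts n m))"
  shows "(`) (torus_rotation m (k * (2*m - 1))) ` (`) (torus_rotation m k) ` M = M"
proof (rule image_image_cancel)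
  fix e assume "e \<in> M"
  with assms have "e \<subseteq> torus_verts n m" by blast
  then show "torus_rotation m (k * (2*m - 1)) ` torus_rotation m k ` e = e"
    using torus_rotation_inverse by (intro image_image_cancel) blast
qed

lemma tres_adj_torus_rotation:
  "tres_adj n m M M' \<Longrightarrow>
     tres_adj n m ((`) (torus_rotation m k) ` M) ((`) (torus_rotation m k) ` M')"
  by (rule tres_adj_image[OF bij_betw_torus_rotation torus_rotation_edge torus_rotation_face_mem])

lemma tres_adj_torus_rotation_iff:
  assumes "M \<in> Pow (Pow (torus_verts n m))" and "M' \<in> Pow (Pow (torus_verts n m))"
  shows "tres_adj n m ((`) (torus_rotation m k) ` M) ((`) (torus_rotation m k) ` M')
     \<longleftrightarrow> tres_adj n m M M'"
proof
  assume "tres_adj n m ((`) (torus_rotation m k) ` M) ((`) (torus_rotation m k) ` M')"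
  then have "tres_adj n m ((`) (torus_rotation m (k * (2*m - 1))) ` (`) (torus_rotation m k) ` M)
     ((`) (torus_rotation m (k * (2*m - 1))) ` (`) (torus_rotation m k) ` M')"
    by (rule tres_adj_torus_rotation)
  then show "tres_adj n m M M'"
    by (simp only: torus_rotation_matching_inverse[OF assms(1)] torus_rotation_matching_inverse[OF assms(2)])
qed (rule tres_adj_torus_rotation)

lemma Eset_eq_image: "Eset n m i = (\<lambda>j. uedge n m (i mod (2*m)) j) ` {..<2*n+1}"
  unfolding Eset_def by auto

lemma torus_rotation_Eset: "(`) (torus_rotation m 1) ` Eset n m i = Eset n m (i + 1)"
  unfolding Eset_eq_image image_image by (simp only: torus_rotation_uedge mod_add_left_eq)

lemma torus_rotation_M1: "(`) (torus_rotation m 1) ` M1 n m = M2 n m"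
  unfolding M1_def M2_def image_UN
proof (rule SUP_cong)
  fix k :: nat assume "k \<in> {1..m}"
  then have "2*k - 1 + 1 = 2*k" by simp
  then show "(`) (torus_rotation m 1) ` Eset n m (2*k - 1) = Eset n m (2*k)"
    by (simp only: torus_rotation_Eset)
qed simp

lemma Eset_subset_edges:
  assumes "0 < m"
  shows "Eset n m i \<subseteq> torus_edges n m"
proof
  fix e assume "e \<in> Eset n m i"
  then obtain j where "j < 2*n+1" "e = uedge n m (i mod (2*m)) j"
    unfolding Eset_def by blast
  moreover have "i mod (2*m) < 2*m" using assms by simp
  ultimately show "e \<in> torus_edges n m"
    unfolding torus_edges_def by blast
qed

lemma M1_subset_edges: "0 < m \<Longrightarrow> M1 n m \<subseteq> torus_edges n m"
  unfolding M1_def using Eset_subset_edges by blast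

theorem theorem4p4:
  fixes n m :: nat
  assumes "n \<ge> 1" and "m \<ge> 2"
  shows "graph_iso (tres_component n m (M1 n m)) (tres_adj n m)
                   (tres_component n m (M2 n m)) (tres_adj n m)"
proof -
  let ?S = "Pow (Pow (torus_verts n m))" and ?rot = "(`) ((`) (torus_rotation m 1))"
  have bij: "bij_betw ?rot ?S ?S"
    using bij_betw_torus_rotation by (intro bij_betw_image_Pow)
  have iff: "tres_adj n m (?rot M) (?rot M') \<longleftrightarrow> tres_adj n m M M'"
    if "M \<in> ?S" "M' \<in> ?S" for M M'
    using that by (rule tres_adj_torus_rotation_iff)
  have "M1 n m \<subseteq> torus_edges n m"
    using \<open>m \<ge> 2\<close> by (intro M1_subset_edges) simp
  then have "M1 n m \<in> ?S"
    using torus_edges_subset_Pow by blast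
  from graph_iso_component_image[where adj = "tres_adj n m", OF bij iff tres_adj_Pow this]
  show ?thesis
    unfolding tres_component_def torus_rotation_M1 .
qed

end
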